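(* Let $c>0$. A countable collection of languages $\mathcal{L}$ is generable in the limit with set-based lower density $c$ under finite noise and finite omissions (i.e., there is a set-based generator which, for every $K\in\mathcal{L}$ and every enumeration of $K$ with finite noise and finite omissions, outputs sets $A_n$ with $A_n\subseteq K$ for all sufficiently large $n$ and $\liminf_{n}\mu_{\rm low}(A_n,K)\ge c$) if and only if for all $L,L'\in\mathcal{L}$ with $|L\setminus L'|<\infty$ it holds that $\mu_{\rm low}(L,L')\ge c$.
   Context: The universe is $U=\mathbb{N}$ with its natural order. A language is an infinite subset of $U$; a collection is a countable family of languages. For $A,B\subseteq\mathbb{N}$ with $B=\{b_1<b_2<\cdots\}$, $\mu_{\rm low}(A,B)=\liminf_n\frac1n|A\cap\{b_1,\dots,b_n\}|$. An enumeration is a sequence of distinct elements of $U$; $S_n=\{x_1,\dots,x_n\}$. An enumeration of $K$ with finite noise and finite omissions is a sequence in which every element of some $\hat K\subseteq K$ with $|K\setminus\hat K|<\infty$ appears exactly once and only finitely many elements outside $\hat K$ appear. A set-based generator is a sequence of maps that, given $x_1,\dots,x_n$ (and knowledge of $\mathcal{L}$, not of $K$), outputs $A_n\subseteq U\setminus S_n$. *)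

theory Defs
  imports Main "HOL-Library.Infinite_Set" "HOL-Library.Countable_Set"
          "HOL-Library.Extended_Real" "HOL-Library.Liminf_Limsup"
begin

text \<open>Lower density of A relative to an (infinite) set B = {b_1 < b_2 < ...}:
  liminf_n (1/n) |A \<inter> {b_1,...,b_n}|.  Here enumerate B k is b_(k+1).\<close>
definition mu_low :: "nat set \<Rightarrow> nat set \<Rightarrow> ereal" where
  "mu_low A B = liminf (\<lambda>n::nat. ereal (real (card (A \<inter> enumerate B ` {..<Suc n})) / real (Suc n)))"

definition collection :: "nat set set \<Rightarrow> bool" where
  "collection Lc \<longleftrightarrow> countable Lc \<and> (\<forall>L\<in>Lc. infinite L)"

text \<open>x (x 0 = x_1, x 1 = x_2, ...) is an enumeration of K with finite noise and finite omissions: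
  a sequence of distinct elements in which every element of some cofinite subset Kh of K appears
  (exactly once, by distinctness) and only finitely many elements outside Kh appear.\<close>
definition noisy_enum :: "nat set \<Rightarrow> (nat \<Rightarrow> nat) \<Rightarrow> bool" where
  "noisy_enum K x \<longleftrightarrow> inj x \<and>
     (\<exists>Kh. Kh \<subseteq> K \<and> finite (K - Kh) \<and> Kh \<subseteq> range x \<and> finite (range x - Kh))"

definition set_generator :: "(nat list \<Rightarrow> nat set) \<Rightarrow> bool" where
  "set_generator G \<longleftrightarrow> (\<forall>xs. G xs \<inter> set xs = {})"

definition generable_low_density_noisy :: "nat set set \<Rightarrow> real \<Rightarrow> bool" where
  "generable_low_density_noisy Lc c \<longleftrightarrow>
     (\<exists>G. set_generator G \<and>
        (\<forall>K\<in>Lc. \<forall>x. noisy_enum K x \<longrightarrow>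
           (\<forall>\<^sub>F n in sequentially. G (map x [0..<n]) \<subseteq> K) \<and>
           liminf (\<lambda>n. mu_low (G (map x [0..<n])) K) \<ge> ereal c))"

end

theory Submission
  imports Defs "HOL-Analysis.Extended_Real_Limits" "HOL-Library.Sublist"
begin

(* Necessity: if L - L' is finite, every finite list of distinct elements of L' can be continued
   to a noisy enumeration of L, after which the generator must eventually output subsets of L.
   Alternating such continuations with the elements of L', taken in turn, produces an enumeration
   of L' along which, infinitely often, the output lies in L and so has lower density in L' at
   most mu_low L L'.
   Sufficiency: a hypothesis is a language of the collection together with a bound on the noise.
   The generator intersects the consistent hypotheses up to the largest "critical" one, i.e. one
   that is cofinitely contained in every smaller consistent hypothesis.  Eventually the true pair
   (K, noise) is critical, so the output lies in K and is cofinite in a language L with L - K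
   finite, whose density in K is at least c by assumption. *)

lemma Liminf_le_if_frequently:
  fixes f :: "'a \<Rightarrow> 'b::complete_linorder"
  assumes "\<exists>\<^sub>F x in F. f x \<le> a"
  shows "Liminf F f \<le> a"
proof (rule ccontr)
  assume "\<not> Liminf F f \<le> a"
  then have "\<forall>\<^sub>F x in F. a < f x"
    by (simp add: less_LiminfD not_le)
  with assms show False
    by (simp add: frequently_def eventually_mono not_le)
qed

lemma mu_low_mono:
  assumes "A \<subseteq> A'"
  shows "mu_low A B \<le> mu_low A' B"
  unfolding mu_low_def
proof (intro Liminf_mono always_eventually allI)
  fix n
  have "card (A \<inter> enumerate B ` {..<Suc n}) \<le> card (A' \<inter> enumerate B ` {..<Suc n})"
    using assms by (intro card_mono) auto
  then show "ereal (card (A \<inter> enumerate B ` {..<Suc n}) / Suc n)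
      \<le> ereal (card (A' \<inter> enumerate B ` {..<Suc n}) / Suc n)"
    by (simp add: divide_right_mono)
qed

lemma mu_low_diff_finite:
  assumes "finite F"
  shows "mu_low (A - F) B = mu_low A B"
proof (rule antisym)
  show "mu_low (A - F) B \<le> mu_low A B"
    by (rule mu_low_mono) blast
  define S where "S n = enumerate B ` {..<Suc n}" for n
  have card_le: "card (A \<inter> S n) \<le> card ((A - F) \<inter> S n) + card F" for n
  proof -
    have "card (A \<inter> S n) \<le> card ((A - F) \<inter> S n \<union> F)"
      using assms by (intro card_mono) (auto simp: S_def)
    also have "\<dots> \<le> card ((A - F) \<inter> S n) + card F"
      by (rule card_Un_le)
    finally show ?thesis .
  qed
  have "ereal (card (A \<inter> S n) / Suc n)
      \<le> ereal (card F / Suc n) + ereal (card ((A - F) \<inter> S n) / Suc n)" for n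
    using card_le [of n] by (simp add: add_divide_distrib [symmetric] divide_right_mono)
  then have "mu_low A B \<le> liminf (\<lambda>n. ereal (card F / Suc n) + ereal (card ((A - F) \<inter> S n) / Suc n))"
    unfolding mu_low_def S_def by (intro Liminf_mono always_eventually) blast
  also have "\<dots> = 0 + mu_low (A - F) B"
    unfolding mu_low_def S_def
  proof (rule ereal_liminf_lim_add)
    have "(\<lambda>n. real (card F) / real (Suc n)) \<longlonglongrightarrow> 0"
      using LIMSEQ_Suc[OF lim_const_over_n] by simp
    then show "(\<lambda>n. ereal (card F / Suc n)) \<longlonglongrightarrow> 0"
      by (simp add: zero_ereal_def)
  qed simp
  finally show "mu_low A B \<le> mu_low (A - F) B" by simp
qed

lemma mu_low_le_if_finite_diff:
  assumes "finite (A - A')"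
  shows "mu_low A B \<le> mu_low A' B"
proof -
  have "mu_low A B = mu_low (A - (A - A')) B"
    using assms by (rule mu_low_diff_finite [symmetric])
  also have "\<dots> \<le> mu_low A' B"
    by (rule mu_low_mono) blast
  finally show ?thesis .
qed

lemma prefix_chain_limit:
  fixes P :: "nat \<Rightarrow> 'a list"
  assumes chain: "\<And>m. prefix (P m) (P (Suc m))" and long: "\<And>m. m \<le> length (P m)"
  defines "x \<equiv> \<lambda>k. P (Suc k) ! k"
  shows prefix_chain_limit_map: "map x [0..<length (P m)] = P m"
    and prefix_chain_limit_range: "range x = (\<Union>m. set (P m))"
    and prefix_chain_limit_inj: "(\<And>m. distinct (P m)) \<Longrightarrow> inj x"
proof -
  have mono: "prefix (P m) (P m')" if "m \<le> m'" for m m'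
    using that by (induction m' rule: dec_induct) (auto intro: prefix_order.trans chain)
  have nth_eq: "xs ! k = ys ! k" if "prefix xs ys" "k < length xs" for xs ys :: "'a list" and k
    using that by (auto simp: prefix_def nth_append)
  have "x k = P m ! k" if "k < length (P m)" for k m
  proof -
    have "k < length (P (Suc k))"
      using long [of "Suc k"] by simp
    then have "x k = P (max m (Suc k)) ! k"
      unfolding x_def by (intro nth_eq mono) simp_all
    also have "\<dots> = P m ! k"
      using that by (intro nth_eq [symmetric] mono) simp_all
    finally show ?thesis .
  qed
  then show map_eq: "map x [0..<length (P m)] = P m" for m
    by (intro nth_equalityI) simp_all
  have set_eq: "set (P m) = x ` {0..<length (P m)}" for m
  proof -
    have "set (map x [0..<length (P m)]) = x ` {0..<length (P m)}"
      by simp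
    then show ?thesis
      by (simp only: map_eq)
  qed
  show "range x = (\<Union>m. set (P m))"
  proof (intro equalityI subsetI)
    fix y
    assume "y \<in> range x"
    then obtain k where "y = x k"
      by blast
    moreover have "k < length (P (Suc k))"
      using long [of "Suc k"] by simp
    ultimately have "y \<in> set (P (Suc k))"
      by (simp add: set_eq)
    then show "y \<in> (\<Union>m. set (P m))"
      by blast
  qed (auto simp: set_eq)
  show "inj x" if "\<And>m. distinct (P m)"
  proof (rule injI)
    fix a b
    assume "x a = x b"
    define m where "m = Suc (max a b)"
    have "distinct (map x [0..<length (P m)])"
      using that by (simp only: map_eq)
    then have "inj_on x {0..<length (P m)}"
      by (simp add: distinct_map)
    moreover have "a < length (P m)" "b < length (P m)"
      using long [of m] by (auto simp: m_def)
    ultimately show "a = b"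
      using \<open>x a = x b\<close> by (auto dest: inj_onD)
  qed
qed

lemma extend_list_to_enumeration:
  fixes D :: "nat set"
  assumes "distinct p" and "infinite D"
  obtains y where "inj y" and "map y [0..<length p] = p" and "range y = set p \<union> D"
proof
  define E where "E = enumerate (D - set p)"
  have E: "inj E" "range E = D - set p"
    using assms(2) by (simp_all add: E_def inj_enumerate range_enumerate)
  define P where "P m = p @ map E [0..<m]" for m
  have chain: "prefix (P m) (P (Suc m))" and long: "m \<le> length (P m)" for m
    by (simp_all add: P_def)
  define y where "y k = P (Suc k) ! k" for k
  note limit = prefix_chain_limit [of P, folded y_def, OF chain long]
  have "distinct (P m)" for m
    using assms(1) E by (auto simp: P_def distinct_map inj_on_subset [OF E(1)])
  then show "inj y"
    by (rule limit(3))
  show "map y [0..<length p] = p"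
    using limit(1) [of 0] by (simp add: P_def)
  have "E k \<in> set (P (Suc k))" for k
    by (simp add: P_def)
  moreover have "set p \<subseteq> set (P 0)"
    by (simp add: P_def)
  moreover have "(\<Union>m. set (P m)) \<subseteq> set p \<union> range E"
    by (auto simp: P_def)
  ultimately have "(\<Union>m. set (P m)) = set p \<union> range E"
    by blast
  then show "range y = set p \<union> D"
    using E(2) limit(2) by auto
qed

lemma enumeration_with_frequent_good_prefixes:
  fixes B :: "nat set" and good :: "nat list \<Rightarrow> bool"
  assumes "infinite B"
    and extend: "\<And>p. distinct p \<Longrightarrow> set p \<subseteq> B \<Longrightarrow>
      \<exists>q. q \<noteq> [] \<and> distinct (p @ q) \<and> set q \<subseteq> B \<and> good (p @ q)"
  obtains x where "inj x" and "range x = B" and "\<exists>\<^sub>F n in sequentially. good (map x [0..<n])"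
proof -
  define ext where "ext p = p @ (SOME q. q \<noteq> [] \<and> distinct (p @ q) \<and> set q \<subseteq> B \<and> good (p @ q))"
    for p
  \<comment> \<open>Visiting \<open>enumerate B m\<close> in round \<open>m\<close> makes the limit enumeration exhaust \<open>B\<close>.\<close>
  define visit where "visit p b = (if b \<in> set p then p else p @ [b])" for p and b :: nat
  define P where "P = rec_nat [] (\<lambda>m p. ext (visit p (enumerate B m)))"
  have P_Suc: "P (Suc m) = ext (visit (P m) (enumerate B m))" for m
    by (simp add: P_def)
  have ext: "length p < length (ext p) \<and> prefix p (ext p) \<and> distinct (ext p) \<and> set (ext p) \<subseteq> B
      \<and> good (ext p)" if "distinct p" "set p \<subseteq> B" for p
  proof -
    define q where "q = (SOME q. q \<noteq> [] \<and> distinct (p @ q) \<and> set q \<subseteq> B \<and> good (p @ q))"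
    have "q \<noteq> [] \<and> distinct (p @ q) \<and> set q \<subseteq> B \<and> good (p @ q)"
      unfolding q_def by (rule someI_ex [OF extend [OF that]])
    moreover have "ext p = p @ q"
      by (simp add: ext_def q_def)
    ultimately show ?thesis
      using that(2) by simp
  qed
  have visit: "prefix p (visit p b)" "set (visit p b) = insert b (set p)"
      "distinct p \<Longrightarrow> distinct (visit p b)" for p b
    by (auto simp: visit_def)
  have P: "distinct (P m) \<and> set (P m) \<subseteq> B" for m
  proof (induction m)
    case 0
    then show ?case
      by (simp add: P_def)
  next
    case (Suc m)
    then have "distinct (visit (P m) (enumerate B m))" "set (visit (P m) (enumerate B m)) \<subseteq> B"
      using visit enumerate_in_set [OF \<open>infinite B\<close>] by auto
    then show ?case
      using ext by (simp add: P_Suc)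
  qed
  have step: "length (P m) < length (P (Suc m)) \<and> prefix (P m) (P (Suc m))
      \<and> enumerate B m \<in> set (P (Suc m)) \<and> good (P (Suc m))" for m
  proof -
    define v where "v = visit (P m) (enumerate B m)"
    have "distinct v" "set v \<subseteq> B"
      using P [of m] visit enumerate_in_set [OF \<open>infinite B\<close>] by (auto simp: v_def)
    then have v: "length v < length (ext v)" "prefix v (ext v)" "good (ext v)"
      using ext by blast+
    have "prefix (P m) v" "enumerate B m \<in> set v"
      using visit by (simp_all add: v_def)
    then have "length (P m) < length (ext v)" "prefix (P m) (ext v)" "enumerate B m \<in> set (ext v)"
      using v prefix_length_le [of "P m" v] set_mono_prefix [OF v(2)]
      by (auto intro: prefix_order.trans)
    with v(3) show ?thesis
      by (simp add: P_Suc v_def)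
  qed
  have long: "m \<le> length (P m)" for m
  proof (induction m)
    case (Suc m)
    then show ?case
      using step [of m] by simp
  qed simp
  define x where "x k = P (Suc k) ! k" for k
  have chain: "prefix (P m) (P (Suc m))" for m
    using step by blast
  note limit = prefix_chain_limit [of P, folded x_def, OF chain long]
  show thesis
  proof
    show "inj x"
      using P by (intro limit(3)) blast
    show "range x = B"
    proof
      show "range x \<subseteq> B"
        using P unfolding limit(2) by blast
      show "B \<subseteq> range x"
      proof
        fix b
        assume "b \<in> B"
        then obtain m where "b = enumerate B m"
          using \<open>infinite B\<close> by (metis enumerate_Ex)
        then have "b \<in> set (P (Suc m))"
          using step by blast
        then show "b \<in> range x"
          unfolding limit(2) by blast
      qed
    qed
    show "\<exists>\<^sub>F n in sequentially. good (map x [0..<n])"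
      unfolding frequently_sequentially
    proof
      fix N
      have "N \<le> length (P (Suc N))"
        using long [of "Suc N"] by simp
      then show "\<exists>n\<ge>N. good (map x [0..<n])"
        using step [of N] limit(1) [of "Suc N"] by metis
    qed
  qed
qed

lemma noisy_enum_starting_with:
  assumes "infinite L" and "finite (L - L')" and "distinct p" and "set p \<subseteq> L'"
  obtains y where "noisy_enum L y" and "map y [0..<length p] = p" and "range y \<subseteq> L'"
proof -
  have "L = (L \<inter> L') \<union> (L - L')"
    by blast
  then have "infinite (L \<inter> L')"
    using assms(1,2) by (metis finite_Un)
  with assms(3) obtain y where y: "inj y" "map y [0..<length p] = p" "range y = set p \<union> (L \<inter> L')"
    by (rule extend_list_to_enumeration)
  have "noisy_enum L y"
    unfolding noisy_enum_def
  proof (intro conjI exI [of _ "L \<inter> L' - set p"])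
    have "L - (L \<inter> L' - set p) \<subseteq> (L - L') \<union> set p"
      by blast
    then show "finite (L - (L \<inter> L' - set p))"
      using assms(2) by (simp add: finite_subset)
    have "range y - (L \<inter> L' - set p) \<subseteq> set p"
      using y(3) by blast
    then show "finite (range y - (L \<inter> L' - set p))"
      by (rule finite_subset) simp
  qed (use y in auto)
  moreover have "range y \<subseteq> L'"
    using y(3) assms(4) by blast
  ultimately show thesis
    using y(2) that by blast
qed

lemma generable_imp_mu_low_ge:
  assumes "collection Lc" and "generable_low_density_noisy Lc c"
    and "L \<in> Lc" and "L' \<in> Lc" and "finite (L - L')"
  shows "ereal c \<le> mu_low L L'"
proof -
  obtain G where G: "\<forall>K\<in>Lc. \<forall>x. noisy_enum K x \<longrightarrow>
      (\<forall>\<^sub>F n in sequentially. G (map x [0..<n]) \<subseteq> K) \<and>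
      ereal c \<le> liminf (\<lambda>n. mu_low (G (map x [0..<n])) K)"
    using assms(2) unfolding generable_low_density_noisy_def by blast
  have "infinite L" and "infinite L'"
    using assms(1,3,4) by (auto simp: collection_def)
  have extend: "\<exists>q. q \<noteq> [] \<and> distinct (p @ q) \<and> set q \<subseteq> L' \<and> G (p @ q) \<subseteq> L"
    if p: "distinct p" "set p \<subseteq> L'" for p
  proof -
    obtain y where y: "noisy_enum L y" "map y [0..<length p] = p" "range y \<subseteq> L'"
      using \<open>infinite L\<close> assms(5) p by (rule noisy_enum_starting_with)
    then have "\<forall>\<^sub>F n in sequentially. G (map y [0..<n]) \<subseteq> L"
      using G assms(3) by blast
    then have "\<forall>\<^sub>F n in sequentially. length p < n \<and> G (map y [0..<n]) \<subseteq> L"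
      by (intro eventually_conj eventually_gt_at_top)
    then obtain n where n: "length p < n" "G (map y [0..<n]) \<subseteq> L"
      unfolding eventually_sequentially by (meson order_refl)
    define q where "q = map y [length p..<n]"
    have "[0..<n] = [0..<length p] @ [length p..<n]"
      using upt_add_eq_append [of 0 "length p" "n - length p"] n(1) by simp
    then have "map y [0..<n] = p @ q"
      using y(2) by (simp add: q_def)
    moreover have "distinct (map y [0..<n])"
    proof -
      have "inj y"
        using y(1) by (simp add: noisy_enum_def)
      then show ?thesis
        by (simp add: distinct_map inj_on_subset [of y UNIV])
    qed
    moreover have "set q \<subseteq> L'"
      using y(3) by (auto simp: q_def)
    moreover have "q \<noteq> []"
      using n(1) by (simp add: q_def)
    ultimately show ?thesis
      using n(2) by (intro exI [of _ q]) simp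
  qed
  obtain x where x: "inj x" "range x = L'" "\<exists>\<^sub>F n in sequentially. G (map x [0..<n]) \<subseteq> L"
    using \<open>infinite L'\<close> extend
    by (rule enumeration_with_frequent_good_prefixes [where good = "\<lambda>p. G p \<subseteq> L"])
  have "noisy_enum L' x"
    unfolding noisy_enum_def using x(1,2) by auto
  then have "ereal c \<le> liminf (\<lambda>n. mu_low (G (map x [0..<n])) L')"
    using G assms(4) by blast
  also have "\<dots> \<le> mu_low L L'"
    by (rule Liminf_le_if_frequently) (rule frequently_elim1 [OF x(3) mu_low_mono])
  finally show ?thesis .
qed

text \<open>A hypothesis \<open>q\<close> codes a language of \<open>Lc\<close> together with a bound on the noise.  For
  \<open>Lc = {}\<close> its language is an unspecified value, which is harmless as there is nothing to generate.\<close>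

definition hypothesis_lang :: "nat set set \<Rightarrow> nat \<Rightarrow> nat set" where
  "hypothesis_lang Lc q = from_nat_into Lc (fst (prod_decode q))"

definition noise_budget :: "nat \<Rightarrow> nat" where
  "noise_budget q = snd (prod_decode q)"

text \<open>The condition \<open>q < length xs\<close> leaves only finitely many hypotheses consistent at any time, so
  a greatest critical one exists.\<close>

definition noise_consistent :: "nat set set \<Rightarrow> nat list \<Rightarrow> nat \<Rightarrow> bool" where
  "noise_consistent Lc xs q \<longleftrightarrow> q < length xs \<and> card (set xs - hypothesis_lang Lc q) \<le> noise_budget q"

definition critical_hypothesis :: "nat set set \<Rightarrow> nat list \<Rightarrow> nat \<Rightarrow> bool" where
  "critical_hypothesis Lc xs q \<longleftrightarrow> noise_consistent Lc xs q \<and>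
     (\<forall>q'<q. noise_consistent Lc xs q' \<longrightarrow> finite (hypothesis_lang Lc q - hypothesis_lang Lc q'))"

definition density_generator :: "nat set set \<Rightarrow> nat list \<Rightarrow> nat set" where
  "density_generator Lc xs =
     (if \<exists>q. critical_hypothesis Lc xs q
      then (\<Inter>q\<in>{q. q \<le> (GREATEST q. critical_hypothesis Lc xs q) \<and> noise_consistent Lc xs q}.
              hypothesis_lang Lc q) - set xs
      else {})"

lemma hypothesis_lang_in: "Lc \<noteq> {} \<Longrightarrow> hypothesis_lang Lc q \<in> Lc"
  by (simp add: hypothesis_lang_def from_nat_into)

lemma critical_hypothesis_Greatest:
  assumes "critical_hypothesis Lc xs q"
  shows "critical_hypothesis Lc xs (GREATEST q. critical_hypothesis Lc xs q)"
    and "q \<le> (GREATEST q. critical_hypothesis Lc xs q)"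
proof -
  have bound: "q' \<le> length xs" if "critical_hypothesis Lc xs q'" for q'
    using that by (simp add: critical_hypothesis_def noise_consistent_def)
  show "critical_hypothesis Lc xs (GREATEST q. critical_hypothesis Lc xs q)"
    using assms bound by (rule GreatestI_nat)
  show "q \<le> (GREATEST q. critical_hypothesis Lc xs q)"
    using assms bound by (rule Greatest_le_nat)
qed

lemma density_generator_subset:
  assumes "critical_hypothesis Lc xs q"
  shows "density_generator Lc xs \<subseteq> hypothesis_lang Lc q"
  using assms critical_hypothesis_Greatest(2) [OF assms]
  by (auto simp: density_generator_def critical_hypothesis_def)

lemma density_generator_almost_contains:
  assumes "critical_hypothesis Lc xs q"
  obtains q' where "finite (hypothesis_lang Lc q' - hypothesis_lang Lc q)"
    and "finite (hypothesis_lang Lc q' - density_generator Lc xs)"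
proof
  define g where "g = (GREATEST q. critical_hypothesis Lc xs q)"
  define I where "I = {q. q \<le> g \<and> noise_consistent Lc xs q}"
  have g: "critical_hypothesis Lc xs g" "q \<le> g"
    unfolding g_def using critical_hypothesis_Greatest [OF assms] by blast+
  have fin: "finite (hypothesis_lang Lc g - hypothesis_lang Lc q')" if "q' \<in> I" for q'
    using that g(1) by (cases "q' = g") (auto simp: I_def critical_hypothesis_def)
  show "finite (hypothesis_lang Lc g - hypothesis_lang Lc q)"
    using fin assms g(2) by (simp add: I_def critical_hypothesis_def)
  have "hypothesis_lang Lc g - density_generator Lc xs
      \<subseteq> (\<Union>q'\<in>I. hypothesis_lang Lc g - hypothesis_lang Lc q') \<union> set xs"
    using assms by (auto simp: density_generator_def I_def g_def)
  moreover have "finite I"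
    by (simp add: I_def)
  then have "finite ((\<Union>q'\<in>I. hypothesis_lang Lc g - hypothesis_lang Lc q') \<union> set xs)"
    using fin by (intro finite_UnI finite_UN_I) simp_all
  ultimately show "finite (hypothesis_lang Lc g - density_generator Lc xs)"
    by (rule finite_subset)
qed

lemma noisy_enum_noise_unbounded:
  assumes "noisy_enum K x" and "infinite (K - L)"
  shows "\<forall>\<^sub>F n in sequentially. b < card (x ` {0..<n} - L)"
proof -
  obtain Kh where Kh: "Kh \<subseteq> K" "finite (K - Kh)" "Kh \<subseteq> range x"
    using assms(1) unfolding noisy_enum_def by blast
  have "K - L \<subseteq> (K - Kh) \<union> (range x - L)"
    using Kh(3) by blast
  then have "infinite (range x - L)"
    using assms(2) Kh(2) by (meson finite_Un finite_subset)
  then obtain F where F: "finite F" "card F = Suc b" "F \<subseteq> range x - L"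
    by (meson infinite_arbitrarily_large)
  moreover have "F \<subseteq> x ` UNIV"
    using F(3) by blast
  ultimately obtain C where "finite C" "F = x ` C"
    using finite_subset_image by meson
  moreover obtain N where "C \<subseteq> {..<N}"
    using \<open>finite C\<close> finite_nat_bounded by blast
  ultimately have "F \<subseteq> x ` {0..<N}"
    by auto
  have "b < card (x ` {0..<n} - L)" if "N \<le> n" for n
  proof -
    have "F \<subseteq> x ` {0..<n} - L"
      using \<open>F \<subseteq> x ` {0..<N}\<close> F(3) that by auto
    then have "card F \<le> card (x ` {0..<n} - L)"
      by (intro card_mono) simp_all
    then show ?thesis
      using F(2) by simp
  qed
  then show ?thesis
    unfolding eventually_sequentially by blast
qed

lemma eventually_critical_hypothesis:
  assumes "countable Lc" and "K \<in> Lc" and "noisy_enum K x"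
  obtains q where "hypothesis_lang Lc q = K"
    and "\<forall>\<^sub>F n in sequentially. critical_hypothesis Lc (map x [0..<n]) q"
proof -
  obtain j where j: "from_nat_into Lc j = K"
    using from_nat_into_surj [OF assms(1,2)] by blast
  obtain Kh where Kh: "Kh \<subseteq> K" "finite (range x - Kh)"
    using assms(3) unfolding noisy_enum_def by blast
  have "range x - K \<subseteq> range x - Kh"
    using Kh(1) by blast
  then have "finite (range x - K)"
    using Kh(2) by (rule finite_subset)
  define q where "q = prod_encode (j, card (range x - K))"
  have lang_q: "hypothesis_lang Lc q = K"
    by (simp add: hypothesis_lang_def q_def j)
  have consistent_q: "noise_consistent Lc (map x [0..<n]) q" if "q < n" for n
  proof -
    have "card (x ` {0..<n} - K) \<le> card (range x - K)"
      using \<open>finite (range x - K)\<close> by (intro card_mono) auto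
    then show ?thesis
      using that lang_q by (simp add: noise_consistent_def noise_budget_def q_def)
  qed
  have "\<forall>\<^sub>F n in sequentially. noise_consistent Lc (map x [0..<n]) q"
    by (rule eventually_mono [OF eventually_gt_at_top consistent_q])
  moreover have "\<forall>\<^sub>F n in sequentially.
      noise_consistent Lc (map x [0..<n]) q' \<longrightarrow> finite (K - hypothesis_lang Lc q')" for q'
  proof (cases "finite (K - hypothesis_lang Lc q')")
    case False
    show ?thesis
      using noisy_enum_noise_unbounded [OF assms(3) False, of "noise_budget q'"]
      by (rule eventually_mono) (simp add: noise_consistent_def)
  qed simp
  then have "\<forall>\<^sub>F n in sequentially. \<forall>q'\<in>{..<q}.
      noise_consistent Lc (map x [0..<n]) q' \<longrightarrow> finite (K - hypothesis_lang Lc q')"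
    by (simp add: eventually_ball_finite)
  ultimately have "\<forall>\<^sub>F n in sequentially. critical_hypothesis Lc (map x [0..<n]) q"
    by eventually_elim (simp add: critical_hypothesis_def lang_q)
  with lang_q show thesis
    by (rule that)
qed

lemma mu_low_ge_imp_generable:
  assumes "collection Lc"
    and bound: "\<forall>L\<in>Lc. \<forall>L'\<in>Lc. finite (L - L') \<longrightarrow> ereal c \<le> mu_low L L'"
  shows "generable_low_density_noisy Lc c"
  unfolding generable_low_density_noisy_def
proof (intro exI conjI ballI allI impI)
  show "set_generator (density_generator Lc)"
    by (auto simp: set_generator_def density_generator_def)
  fix K x
  assume "K \<in> Lc" and "noisy_enum K x"
  obtain q where q: "hypothesis_lang Lc q = K"
    and ev: "\<forall>\<^sub>F n in sequentially. critical_hypothesis Lc (map x [0..<n]) q"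
    using assms(1) \<open>K \<in> Lc\<close> \<open>noisy_enum K x\<close> unfolding collection_def
    by (blast intro: eventually_critical_hypothesis)
  have good: "density_generator Lc xs \<subseteq> K \<and> ereal c \<le> mu_low (density_generator Lc xs) K"
    if crit: "critical_hypothesis Lc xs q" for xs
  proof
    show "density_generator Lc xs \<subseteq> K"
      using density_generator_subset [OF crit] q by simp
    obtain q' where q': "finite (hypothesis_lang Lc q' - K)"
      "finite (hypothesis_lang Lc q' - density_generator Lc xs)"
      using density_generator_almost_contains [OF crit] q by metis
    have "ereal c \<le> mu_low (hypothesis_lang Lc q') K"
      using bound hypothesis_lang_in \<open>K \<in> Lc\<close> q'(1) by blast
    also have "\<dots> \<le> mu_low (density_generator Lc xs) K"
      using q'(2) by (rule mu_low_le_if_finite_diff)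
    finally show "ereal c \<le> mu_low (density_generator Lc xs) K" .
  qed
  show "\<forall>\<^sub>F n in sequentially. density_generator Lc (map x [0..<n]) \<subseteq> K"
    using ev by (rule eventually_mono) (use good in blast)
  show "ereal c \<le> liminf (\<lambda>n. mu_low (density_generator Lc (map x [0..<n])) K)"
    by (rule Liminf_bounded, rule eventually_mono [OF ev]) (use good in blast)
qed

theorem theorem6p5:
  fixes Lc :: "nat set set" and c :: real
  assumes "collection Lc" and "c > 0"
  shows "generable_low_density_noisy Lc c \<longleftrightarrow>
         (\<forall>L\<in>Lc. \<forall>L'\<in>Lc. finite (L - L') \<longrightarrow> mu_low L L' \<ge> ereal c)"
  using generable_imp_mu_low_ge [OF assms(1)] mu_low_ge_imp_generable [OF assms(1)] by blast

end
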